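(* Let $A=\{z\in\mathbb{C}:\operatorname{Re}z>0\}$ and let $P,Q,Q_1$ be polynomials in one complex variable, with $P$ not vanishing on $A$. If $Q(w)+P(w)vQ_1(w)\ne0$ for all $v,w\in A$, then either $S(z)=Q(z)+P(z)Q_1'(z)\ne0$ for all $z\in A$, or $S\equiv0$. *)

theory Defs
  imports Complex_Main "HOL-Computational_Algebra.Polynomial"
begin

definition right_half_plane :: "complex set" where
  "right_half_plane = {z. Re z > 0}"

end

theory Submission
  imports Defs "HOL-Complex_Analysis.Complex_Analysis"
    "HOL-Computational_Algebra.Fundamental_Theorem_Algebra"
begin

text \<open>For \<open>w\<close> in the half-plane the hypothesis says that \<open>-Q/(P Q\<^sub>1)\<close> omits the
  half-plane, i.e. \<open>Re (Q/(P Q\<^sub>1)) \<ge> 0\<close>, and then also \<open>Re (P Q\<^sub>1/Q) \<ge> 0\<close>. By the open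
  mapping theorem a holomorphic function with nonnegative real part vanishes identically as
  soon as it vanishes at one point. Hence \<open>Q\<close> is either zero-free on the half-plane or zero,
  which settles the case of constant \<open>Q\<^sub>1\<close>, and a nonconstant \<open>Q\<^sub>1\<close> is zero-free there. Then
  all roots \<open>r\<close> of \<open>Q\<^sub>1\<close> satisfy \<open>Re r \<le> 0\<close>, so \<open>Re (Q\<^sub>1'/Q\<^sub>1) = Re (\<Sum> 1/(z - r)) > 0\<close> on the
  half-plane, whereas at a zero of \<open>S\<close> we would have \<open>Q/(P Q\<^sub>1) = -Q\<^sub>1'/Q\<^sub>1\<close>.\<close>

lemma Re_divide_nonneg_commute:
  fixes a b :: complex
  shows "0 \<le> Re (a / b) \<longleftrightarrow> 0 \<le> Re (b / a)"
  by (cases "a = 0"; cases "b = 0") (simp_all add: Re_divide' zero_le_divide_iff mult.commute)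

lemma Re_divide_nonneg_if_affine_nonzero:
  fixes a b :: complex
  assumes "\<forall>v\<in>right_half_plane. a + b * v \<noteq> 0"
  shows "0 \<le> Re (a / b)"
proof (rule ccontr)
  assume "\<not> 0 \<le> Re (a / b)"
  then have "b \<noteq> 0" and "- a / b \<in> right_half_plane" by (auto simp: right_half_plane_def)
  moreover from \<open>b \<noteq> 0\<close> have "a + b * (- a / b) = 0" by simp
  ultimately show False using assms by blast
qed

lemma holomorphic_Re_nonneg_zero_imp_zero:
  assumes holf: "f holomorphic_on S" and "open S" "connected S"
    and "z \<in> S" "f z = 0" and Re_nonneg: "\<forall>w\<in>S. 0 \<le> Re (f w)"
  shows "\<forall>w\<in>S. f w = 0"
proof (cases "f constant_on S")
  case True
  with \<open>z \<in> S\<close> \<open>f z = 0\<close> show ?thesis by (metis constant_on_def)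
next
  case False
  then have "open (f ` S)"
    using open_mapping_thm[OF holf] \<open>open S\<close> \<open>connected S\<close> by blast
  moreover have "0 \<in> f ` S" using \<open>z \<in> S\<close> \<open>f z = 0\<close> by (metis image_eqI)
  ultimately obtain e where "e > 0" "ball 0 e \<subseteq> f ` S"
    by (meson open_contains_ball)
  moreover have "complex_of_real (- e / 2) \<in> ball 0 e" using \<open>e > 0\<close> by simp
  ultimately have "complex_of_real (- e / 2) \<in> f ` S" by blast
  then obtain w where "w \<in> S" "f w = complex_of_real (- e / 2)" by (metis imageE)
  then have "Re (f w) < 0" "0 \<le> Re (f w)" using \<open>e > 0\<close> Re_nonneg by auto
  then show ?thesis by linarith
qed

lemma poly_eq_0_if_vanishes_on_open:
  fixes p :: "'a :: real_normed_field poly"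
  assumes "open S" "S \<noteq> {}" "\<forall>w\<in>S. poly p w = 0"
  shows "p = 0"
proof (rule ccontr)
  assume "p \<noteq> 0"
  moreover have "S \<subseteq> {w. poly p w = 0}" using assms(3) by blast
  ultimately have "finite S" using poly_roots_finite finite_subset by blast
  then show False using finite_imp_not_open assms(1,2) by blast
qed

lemma poly_eq_0_if_Re_quotient_nonneg:
  fixes p q :: "complex poly"
  assumes "open S" "z \<in> S" "poly p z = 0" "poly q z \<noteq> 0"
    and Re_nonneg: "\<forall>w\<in>S. 0 \<le> Re (poly p w / poly q w)"
  shows "p = 0"
proof -
  have "open (S \<inter> {w. poly q w \<noteq> 0})"
    using \<open>open S\<close> by (intro open_Int open_Collect_neq continuous_intros)
  moreover have "z \<in> S \<inter> {w. poly q w \<noteq> 0}" using assms(2,4) by simp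
  ultimately obtain r where "r > 0" and r: "ball z r \<subseteq> S \<inter> {w. poly q w \<noteq> 0}"
    by (meson open_contains_ball)
  have "(\<lambda>w. poly p w / poly q w) holomorphic_on ball z r"
    using r by (intro holomorphic_intros) auto
  then have "\<forall>w\<in>ball z r. poly p w / poly q w = 0"
  proof (rule holomorphic_Re_nonneg_zero_imp_zero[OF _ open_ball connected_ball])
    show "z \<in> ball z r" using \<open>r > 0\<close> by simp
    show "poly p z / poly q z = 0" using assms(3) by simp
    show "\<forall>w\<in>ball z r. 0 \<le> Re (poly p w / poly q w)" using r Re_nonneg by blast
  qed
  then have "\<forall>w\<in>ball z r. poly p w = 0" using r by auto
  moreover have "ball z r \<noteq> {}" using \<open>r > 0\<close> by simp
  ultimately show "p = 0" using poly_eq_0_if_vanishes_on_open[OF open_ball] by blast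
qed

lemma poly_zero_free_or_eq_0_if_Re_quotient_nonneg:
  fixes p q :: "complex poly"
  assumes "open S" "\<forall>w\<in>S. poly p w \<noteq> 0 \<or> poly q w \<noteq> 0"
    and "\<forall>w\<in>S. 0 \<le> Re (poly p w / poly q w)"
  shows "(\<forall>z\<in>S. poly p z \<noteq> 0) \<or> p = 0"
  using poly_eq_0_if_Re_quotient_nonneg assms by blast

lemma poly_logderiv_linear_factor:
  fixes q :: "complex poly"
  assumes "poly q z \<noteq> 0" "z \<noteq> r"
  shows "poly (pderiv ([:-r, 1:] * q)) z / poly ([:-r, 1:] * q) z
           = poly (pderiv q) z / poly q z + 1 / (z - r)"
proof -
  have pderiv_prod: "pderiv ([:-r, 1:] * q) = [:-r, 1:] * pderiv q + q"
    unfolding pderiv_mult by (simp add: pderiv_pCons one_pCons)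
  have "poly (pderiv ([:-r, 1:] * q)) z = (z - r) * poly (pderiv q) z + poly q z"
    unfolding pderiv_prod by (simp add: algebra_simps)
  with assms show ?thesis by (simp add: field_simps)
qed

lemma Re_poly_logderiv_pos:
  fixes p :: "complex poly"
  assumes "0 < degree p" "\<forall>w\<in>right_half_plane. poly p w \<noteq> 0" "z \<in> right_half_plane"
  shows "0 < Re (poly (pderiv p) z / poly p z)"
  using assms(1,2)
proof (induction "degree p" arbitrary: p rule: less_induct)
  case less
  obtain r where "poly p r = 0"
    using less.prems(1) fundamental_theorem_of_algebra constant_degree by (metis neq0_conv)
  then obtain q where p: "p = [:-r, 1:] * q" by (metis dvdE poly_eq_0_iff_dvd)
  have "Re r \<le> 0"
    using \<open>poly p r = 0\<close> less.prems(2) unfolding right_half_plane_def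
    by (metis mem_Collect_eq not_le)
  have "Re z > 0" using assms(3) by (simp add: right_half_plane_def)
  then have "z \<noteq> r" using \<open>Re r \<le> 0\<close> by auto
  have "q \<noteq> 0" using p less.prems(1) by auto
  then have "degree q < degree p" unfolding p by (subst degree_mult_eq) auto
  have q_nz: "\<forall>w\<in>right_half_plane. poly q w \<noteq> 0" using less.prems(2) p by auto
  have "0 \<le> Re (poly (pderiv q) z / poly q z)"
  proof (cases "degree q = 0")
    case True
    then have "pderiv q = 0" by (simp add: pderiv_eq_0_iff)
    then show ?thesis by simp
  next
    case False
    then show ?thesis using less.hyps[OF \<open>degree q < degree p\<close> _ q_nz] by simp
  qed
  moreover have "0 < Re (1 / (z - r))"
    using \<open>Re r \<le> 0\<close> \<open>Re z > 0\<close> by (auto simp: Re_divide' intro!: divide_pos_pos)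
  moreover have "poly (pderiv p) z / poly p z = poly (pderiv q) z / poly q z + 1 / (z - r)"
    unfolding p using q_nz assms(3) \<open>z \<noteq> r\<close> by (intro poly_logderiv_linear_factor) auto
  ultimately show ?case by simp
qed

lemma poly_add_mult_pderiv_nonzero:
  fixes P Q R :: "complex poly"
  assumes "0 < degree R" "\<forall>w\<in>right_half_plane. poly R w \<noteq> 0"
    and "\<forall>w\<in>right_half_plane. poly P w \<noteq> 0"
    and "\<forall>w\<in>right_half_plane. 0 \<le> Re (poly Q w / poly (P * R) w)"
    and "z \<in> right_half_plane"
  shows "poly (Q + P * pderiv R) z \<noteq> 0"
proof
  assume "poly (Q + P * pderiv R) z = 0"
  then have "poly Q z = - (poly P z * poly (pderiv R) z)"
    by (simp add: eq_neg_iff_add_eq_0)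
  then have "poly Q z / poly (P * R) z = - (poly (pderiv R) z / poly R z)"
    using assms(2,3,5) by simp
  then show False
    using assms(4,5) Re_poly_logderiv_pos[OF assms(1,2,5)] by fastforce
qed

theorem lemma2p3:
  fixes P Q Q1 :: "complex poly"
  assumes "\<forall>z\<in>right_half_plane. poly P z \<noteq> 0"
    and "\<forall>v\<in>right_half_plane. \<forall>w\<in>right_half_plane.
           poly Q w + poly P w * v * poly Q1 w \<noteq> 0"
  shows "(\<forall>z\<in>right_half_plane. poly (Q + P * pderiv Q1) z \<noteq> 0)
         \<or> Q + P * pderiv Q1 = 0"
proof -
  let ?A = right_half_plane
  have "open ?A" unfolding right_half_plane_def by (rule open_halfspace_Re_gt)
  have "1 \<in> ?A" by (simp add: right_half_plane_def)
  then have "P \<noteq> 0" using assms(1) by auto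
  have no_common_zero: "\<forall>w\<in>?A. poly Q w \<noteq> 0 \<or> poly (P * Q1) w \<noteq> 0"
    using assms(2) \<open>1 \<in> ?A\<close> by fastforce
  have Re_ratio: "\<forall>w\<in>?A. 0 \<le> Re (poly Q w / poly (P * Q1) w)"
    using assms(2) by (auto intro!: Re_divide_nonneg_if_affine_nonzero simp: mult_ac)
  show ?thesis
  proof (cases "degree Q1 = 0")
    case True
    then have "pderiv Q1 = 0" by (simp add: pderiv_eq_0_iff)
    then show ?thesis
      using poly_zero_free_or_eq_0_if_Re_quotient_nonneg[OF \<open>open ?A\<close> no_common_zero Re_ratio]
      by simp
  next
    case False
    have "(\<forall>z\<in>?A. poly (P * Q1) z \<noteq> 0) \<or> P * Q1 = 0"
      using no_common_zero Re_ratio Re_divide_nonneg_commute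
      by (intro poly_zero_free_or_eq_0_if_Re_quotient_nonneg[OF \<open>open ?A\<close>]) blast+
    then have "\<forall>z\<in>?A. poly Q1 z \<noteq> 0" using \<open>P \<noteq> 0\<close> False by auto
    then show ?thesis
      using poly_add_mult_pderiv_nonzero False assms(1) Re_ratio by blast
  qed
qed

end
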